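(* Let $\mathbf X=\{X_n\}$, $\mathbf Z=\{Z_n\}$ be general sources with given couplings $P_{Z_n|X_n}$, and let $\mathbf W=\{W_{Y_n|X_n}\}$ be a general channel. If $\mathbf Z$ is an approximating source for $\mathbf W$ given $\mathbf X$, then for every $\epsilon\in(0,1)$ and every $\gamma>0$, $$\lim_{n\to\infty}\mathbb E_{P_{X_n}}\Big[\mu\big(\{\delta\in[0,1-\epsilon): c_n^{z|x}(\delta+\epsilon,X_n)-c_n^{w}(\delta,X_n)<-\gamma\}\big)\Big]=0 .$$
   Context: Logarithms are natural. For each $n$, $X_n$ and $Z_n$ are jointly distributed random variables on countable sets $\mathcal X_n$, $\mathcal Z_n$, with joint law determined by the pmf $P_{X_n}$ and a conditional pmf $P_{Z_n|X_n}$. The channel $W_{Y_n|X_n}(\cdot|x)$ is a pmf on a countable set $\mathcal Y_n$ for each $x\in\mathcal X_n$. For a random variable $Z$ on a countable set $\mathcal Z$ with pmf $P_Z$, list the elements of positive probability as $z_1,z_2,\dots$ (a finite or countably infinite list) with $P_Z(z_1)\ge P_Z(z_2)\ge\cdots$ (ties broken arbitrarily). Set $\delta_0=0$ and $\delta_k=\sum_{i\le k}P_Z(z_i)$. For $\delta\in[0,1)$ define $c^z(\delta)=\log\frac{1}{P_Z(z_k)}$, where $k$ is the unique index with $\delta\in[\delta_{k-1},\delta_k)$. For $x\in\mathcal X_n$, $c_n^{z|x}(\cdot,x)$ is this function for the pmf $P_{Z_n|X_n}(\cdot|x)$, and $c_n^{w}(\cdot,x)$ is this function for the pmf $W_{Y_n|X_n}(\cdot|x)$.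 $\mu$ is Lebesgue measure. The variational distance is $d(P,Q)=\sum_a|P(a)-Q(a)|$. $\mathbf Z$ is an approximating source for $\mathbf W$ given $\mathbf X$ if there exist deterministic maps $\varphi_n:\mathcal X_n\times\mathcal Z_n\to\mathcal Y_n$ such that $$\lim_{n\to\infty}d\big(P_{X_nY_n},P_{X_n,\varphi_n(X_n,Z_n)}\big)=0,$$ where $P_{X_nY_n}(x,y)=P_{X_n}(x)W_{Y_n|X_n}(y|x)$. *)

theory Defs
  imports "HOL-Probability.Probability"
begin

definition var_dist :: "'a pmf \<Rightarrow> 'a pmf \<Rightarrow> real" where
  "var_dist P Q = (\<Sum>\<^sub>\<infinity> a. \<bar>pmf P a - pmf Q a\<bar>)"

definition dec_enum :: "'a pmf \<Rightarrow> (nat \<Rightarrow> 'a) \<Rightarrow> enat \<Rightarrow> bool" where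
  "dec_enum p e N \<longleftrightarrow>
     bij_betw e {k. enat k < N} (set_pmf p) \<and>
     (\<forall>i j. enat j < N \<longrightarrow> i \<le> j \<longrightarrow> pmf p (e j) \<le> pmf p (e i))"

text \<open>The function c(delta): ln(1/P(z_k)) where delta lies in [delta_{k-1}, delta_k)
  (here with 0-based index k, delta_{k-1} = sum_{i<k}, delta_k = sum_{i<k+1}).
  Ties are broken by an arbitrary (chosen) enumeration.\<close>
definition cfun :: "'a pmf \<Rightarrow> real \<Rightarrow> real" where
  "cfun p \<delta> =
     (let (e, N) = (SOME (e, N). dec_enum p e N);
          k = (THE k. enat k < N \<and> (\<Sum>i<k. pmf p (e i)) \<le> \<delta> \<and> \<delta> < (\<Sum>i<Suc k. pmf p (e i)))
      in ln (1 / pmf p (e k)))"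

definition joint_channel :: "'x pmf \<Rightarrow> ('x \<Rightarrow> 'y pmf) \<Rightarrow> ('x \<times> 'y) pmf" where
  "joint_channel PX W = bind_pmf PX (\<lambda>x. map_pmf (\<lambda>y. (x, y)) (W x))"

definition joint_simulated :: "'x pmf \<Rightarrow> ('x \<Rightarrow> 'z pmf) \<Rightarrow> ('x \<Rightarrow> 'z \<Rightarrow> 'y) \<Rightarrow> ('x \<times> 'y) pmf" where
  "joint_simulated PX PZX \<phi> = bind_pmf PX (\<lambda>x. map_pmf (\<lambda>z. (x, \<phi> x z)) (PZX x))"

definition approximating_source ::
  "(nat \<Rightarrow> 'x pmf) \<Rightarrow> (nat \<Rightarrow> 'x \<Rightarrow> 'z pmf) \<Rightarrow> (nat \<Rightarrow> 'x \<Rightarrow> 'y pmf) \<Rightarrow> bool" where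
  "approximating_source PX PZX W \<longleftrightarrow>
     (\<exists>\<phi> :: nat \<Rightarrow> 'x \<Rightarrow> 'z \<Rightarrow> 'y.
        (\<lambda>n. var_dist (joint_channel (PX n) (W n)) (joint_simulated (PX n) (PZX n) (\<phi> n)))
          \<longlonglongrightarrow> 0)"

end

theory Submission
  imports Defs
begin

text \<open>
  For a pmf \<open>p\<close> and a level \<open>t \<in> [0,1)\<close>, \<open>c\<^sup>p(t) = ln (1/v)\<close> where \<open>v\<close> is the
  mass of the atom sitting at position \<open>t\<close> when the atoms are arranged by decreasing mass; hence
  the atoms of mass \<open>\<ge> v\<close> carry more than \<open>t\<close> and those of mass \<open>> v\<close> at most \<open>t\<close>
  (lemma \<open>cfun_level\<close>).  Now let \<open>p = W(\<cdot>|x)\<close>, \<open>q = P\<^sub>Z\<^sub>|\<^sub>X(\<cdot>|x)\<close> and \<open>q' = \<phi>(x,\<cdot>)\<close> applied to \<open>q\<close>.  If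
  \<open>c\<^sup>q(\<delta>+\<epsilon>) < c\<^sup>p(\<delta>) - \<gamma>\<close>, the corresponding levels satisfy \<open>v\<^sub>q > e\<^sup>\<gamma> v\<^sub>p\<close>; the image \<open>B\<close> of the
  heavy atoms of \<open>q\<close> has \<open>q'(B) > \<delta>+\<epsilon>\<close>, so its part \<open>C\<close> where \<open>p \<le> v\<^sub>p\<close> has \<open>p(C) > \<epsilon> - d(p,q')\<close>,
  while \<open>q' \<ge> e\<^sup>\<gamma> p\<close> on \<open>C\<close> gives \<open>(e\<^sup>\<gamma> - 1) p(C) \<le> d(p,q')\<close>.  Thus \<open>d(p,q') \<ge> (1 - e\<^sup>-\<^sup>\<gamma>) \<epsilon>\<close>
  whenever the set of bad levels is nonempty, and since that set has measure at most 1, its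
  measure is at most \<open>d(p,q') / ((1 - e\<^sup>-\<^sup>\<gamma>) \<epsilon>)\<close>.  Averaging over \<open>X\<^sub>n\<close> turns the conditional
  distances into the distance of the joint laws, which tends to 0 by assumption.
\<close>

lemma finite_pmf_ge:
  fixes p :: "'a pmf"
  assumes "c > 0"
  shows "finite {a. c \<le> pmf p a}"
proof (rule ccontr)
  assume inf: "infinite {a. c \<le> pmf p a}"
  obtain n :: nat where n: "1 / c < real n" using reals_Archimedean2 by blast
  obtain F where F: "F \<subseteq> {a. c \<le> pmf p a}" "finite F" "card F = n"
    using infinite_arbitrarily_large[OF inf] by blast
  have "real n * c = (\<Sum>a\<in>F. c)" using F by simp
  also have "\<dots> \<le> sum (pmf p) F" using F by (intro sum_mono) auto
  also have "\<dots> = measure p F" using F by (simp add: measure_measure_pmf_finite)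
  also have "\<dots> \<le> 1" by simp
  finally show False using n \<open>c > 0\<close> by (simp add: field_simps)
qed

definition pmf_precedes :: "'a::countable pmf \<Rightarrow> 'a \<Rightarrow> 'a \<Rightarrow> bool" where
  "pmf_precedes p b a \<longleftrightarrow> pmf p a < pmf p b \<or> (pmf p b = pmf p a \<and> to_nat b < to_nat a)"

definition pmf_rank :: "'a::countable pmf \<Rightarrow> 'a \<Rightarrow> nat" where
  "pmf_rank p a = card {b \<in> set_pmf p. pmf_precedes p b a}"

lemma pmf_precedes_trans: "pmf_precedes p c b \<Longrightarrow> pmf_precedes p b a \<Longrightarrow> pmf_precedes p c a"
  by (auto simp: pmf_precedes_def)

lemma pmf_precedes_irrefl: "\<not> pmf_precedes p a a"
  by (simp add: pmf_precedes_def)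

lemma pmf_precedes_total: "a \<noteq> b \<Longrightarrow> pmf_precedes p a b \<or> pmf_precedes p b a"
  unfolding pmf_precedes_def by (metis linorder_neqE_linordered_idom linorder_neqE_nat to_nat_split)

lemma finite_pmf_predecessors:
  assumes "a \<in> set_pmf p"
  shows "finite {b \<in> set_pmf p. pmf_precedes p b a}"
proof (rule finite_subset)
  show "{b \<in> set_pmf p. pmf_precedes p b a} \<subseteq> {b. pmf p a \<le> pmf p b}"
    by (auto simp: pmf_precedes_def)
  show "finite {b. pmf p a \<le> pmf p b}"
    using assms by (intro finite_pmf_ge) (simp add: pmf_positive)
qed

lemma pmf_rank_less:
  assumes "a \<in> set_pmf p" "b \<in> set_pmf p" "pmf_precedes p b a"
  shows "pmf_rank p b < pmf_rank p a"
  unfolding pmf_rank_def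
proof (rule psubset_card_mono)
  show "finite {c \<in> set_pmf p. pmf_precedes p c a}"
    using assms(1) by (rule finite_pmf_predecessors)
  show "{c \<in> set_pmf p. pmf_precedes p c b} \<subset> {c \<in> set_pmf p. pmf_precedes p c a}"
    using assms pmf_precedes_trans pmf_precedes_irrefl by blast
qed

lemma inj_on_pmf_rank: "inj_on (pmf_rank p) (set_pmf p)"
  by (rule inj_onI) (metis less_irrefl pmf_rank_less pmf_precedes_total)

lemma pmf_rank_downward_closed:
  assumes "a \<in> set_pmf p" "j < pmf_rank p a"
  shows "j \<in> pmf_rank p ` set_pmf p"
proof -
  define L where "L = {b \<in> set_pmf p. pmf_precedes p b a}"
  have "pmf_rank p ` L \<subseteq> {..<pmf_rank p a}"
    using pmf_rank_less assms(1) by (auto simp: L_def)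
  moreover have "card (pmf_rank p ` L) = pmf_rank p a"
    using inj_on_pmf_rank by (subst card_image) (auto simp: pmf_rank_def L_def intro: inj_on_subset)
  ultimately have "pmf_rank p ` L = {..<pmf_rank p a}"
    by (intro card_subset_eq) auto
  then show ?thesis using assms(2) by (auto simp: L_def)
qed

lemma pmf_rank_image: "\<exists>N. pmf_rank p ` set_pmf p = {k. enat k < N}"
proof (cases "finite (set_pmf p)")
  case True
  have card_eq: "card (pmf_rank p ` set_pmf p) = card (set_pmf p)"
    using inj_on_pmf_rank by (rule card_image)
  have "pmf_rank p ` set_pmf p \<subseteq> {..<card (set_pmf p)}"
  proof
    fix x assume x: "x \<in> pmf_rank p ` set_pmf p"
    then have "{..x} \<subseteq> pmf_rank p ` set_pmf p"
      using pmf_rank_downward_closed by (fastforce simp: le_less)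
    then have "card {..x} \<le> card (set_pmf p)"
      using True card_eq by (metis card_mono finite_imageI)
    then show "x \<in> {..<card (set_pmf p)}" by simp
  qed
  then have "pmf_rank p ` set_pmf p = {..<card (set_pmf p)}"
    using card_eq by (intro card_subset_eq) auto
  then show ?thesis by (intro exI[of _ "enat (card (set_pmf p))"]) auto
next
  case False
  then have inf: "infinite (pmf_rank p ` set_pmf p)"
    using inj_on_pmf_rank finite_imageD by blast
  have "k \<in> pmf_rank p ` set_pmf p" for k
  proof -
    obtain x where "x \<in> pmf_rank p ` set_pmf p" "k < x"
      using inf infinite_nat_iff_unbounded by blast
    then show ?thesis using pmf_rank_downward_closed by auto
  qed
  then show ?thesis by (intro exI[of _ \<infinity>]) auto
qed

text \<open>Inverting the rank gives a decreasing enumeration, so the choice in \<open>cfun\<close> is meaningful.\<close>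
lemma dec_enum_exists:
  fixes p :: "'a::countable pmf"
  shows "\<exists>e N. dec_enum p e N"
proof -
  obtain N where img: "pmf_rank p ` set_pmf p = {k. enat k < N}"
    using pmf_rank_image by blast
  define e where "e = inv_into (set_pmf p) (pmf_rank p)"
  have bij: "bij_betw e {k. enat k < N} (set_pmf p)"
    unfolding e_def using inj_on_pmf_rank img by (metis bij_betw_imageI bij_betw_inv_into)
  have rank_e: "pmf_rank p (e k) = k" if "enat k < N" for k
    using that img by (auto simp: e_def f_inv_into_f)
  have "pmf p (e j) \<le> pmf p (e i)" if "enat j < N" "i \<le> j" for i j
  proof (rule ccontr)
    assume "\<not> ?thesis"
    then have "pmf_precedes p (e j) (e i)" by (auto simp: pmf_precedes_def)
    moreover have "enat i < N" using that by (meson enat_ord_simps(1) le_less_trans)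
    ultimately have "pmf_rank p (e j) < pmf_rank p (e i)"
      using bij that(1) by (intro pmf_rank_less) (auto dest: bij_betwE)
    then show False using rank_e that \<open>enat i < N\<close> by simp
  qed
  then show ?thesis using bij unfolding dec_enum_def by blast
qed

lemma measure_set_pmf: "measure (measure_pmf p) (set_pmf p) = 1"
  by (subst measure_pmf.prob_eq_1) (auto intro: AE_pmfI)

lemma dec_enum_prefix_measure:
  assumes "dec_enum p e N" "enat m \<le> N"
  shows "(\<Sum>i<m. pmf p (e i)) = measure p (e ` {..<m})"
proof -
  have "inj_on e {k. enat k < N}"
    using assms(1) by (auto simp: dec_enum_def dest: bij_betw_imp_inj_on)
  then have "inj_on e {..<m}"
    by (rule inj_on_subset) (use assms(2) in \<open>auto intro: less_le_trans[of _ "enat m"]\<close>)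
  then show ?thesis by (simp add: measure_measure_pmf_finite sum.reindex)
qed

lemma dec_enum_prefix_exceeds:
  assumes "dec_enum p e N" "t < 1"
  shows "\<exists>m. enat m \<le> N \<and> t < (\<Sum>i<m. pmf p (e i))"
proof (cases N)
  case (enat n)
  have "e ` {..<n} = set_pmf p"
    using assms(1) enat by (auto simp: dec_enum_def lessThan_def dest: bij_betw_imp_surj_on)
  then have "(\<Sum>i<n. pmf p (e i)) = 1"
    using dec_enum_prefix_measure[OF assms(1), of n] enat by (simp add: measure_set_pmf)
  then show ?thesis using enat assms(2) by auto
next
  case infinity
  have "e ` UNIV = set_pmf p"
    using assms(1) infinity by (auto simp: dec_enum_def dest: bij_betw_imp_surj_on)
  then have "(\<Union>m. e ` {..<m}) = set_pmf p"
    by (auto intro: lessI)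
  moreover have "(\<lambda>m. measure p (e ` {..<m})) \<longlonglongrightarrow> measure p (\<Union>m. e ` {..<m})"
    by (rule measure_pmf.finite_Lim_measure_incseq) (auto simp: incseq_def)
  ultimately have "(\<lambda>m. measure p (e ` {..<m})) \<longlonglongrightarrow> 1"
    by (simp add: measure_set_pmf)
  then have "eventually (\<lambda>m. t < measure p (e ` {..<m})) sequentially"
    using assms(2) by (rule order_tendstoD)
  then obtain m where "t < measure p (e ` {..<m})"
    unfolding eventually_sequentially by blast
  then show ?thesis using dec_enum_prefix_measure[OF assms(1)] infinity by auto
qed

lemma dec_enum_interval_unique:
  assumes "dec_enum p e N" "0 \<le> t" "t < 1"
  shows "\<exists>!k. enat k < N \<and> (\<Sum>i<k. pmf p (e i)) \<le> t \<and> t < (\<Sum>i<Suc k. pmf p (e i))"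
proof -
  define s where "s m = (\<Sum>i<m. pmf p (e i))" for m
  have s_mono: "s a \<le> s b" if "a \<le> b" for a b
    unfolding s_def using that by (intro sum_mono2) auto
  define m where "m = (LEAST m. enat m \<le> N \<and> t < s m)"
  have m: "enat m \<le> N" "t < s m"
    using LeastI_ex[OF dec_enum_prefix_exceeds[OF assms(1,3)]] by (auto simp: m_def s_def)
  then obtain k where k: "m = Suc k"
    using assms(2) by (cases m) (auto simp: s_def)
  have kN: "enat k < N" using m(1) k by (simp add: Suc_ile_eq)
  have "s k \<le> t"
    using not_less_Least[of k "\<lambda>m. enat m \<le> N \<and> t < s m"] kN k by (auto simp: m_def)
  then have "enat k < N \<and> s k \<le> t \<and> t < s (Suc k)" using kN m k by simp
  moreover have "k' = k" if "s k' \<le> t" "t < s (Suc k')" for k'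
    using \<open>s k \<le> t\<close> m k that s_mono
    by (metis Suc_le_eq less_le_not_le linorder_neqE_nat order.trans)
  ultimately show ?thesis unfolding s_def by blast
qed

lemma cfun_atom:
  fixes p :: "'a::countable pmf"
  assumes "0 \<le> t" "t < 1"
  obtains e N k where "dec_enum p e N" "enat k < N"
    "(\<Sum>i<k. pmf p (e i)) \<le> t" "t < (\<Sum>i<Suc k. pmf p (e i))"
    "cfun p t = ln (1 / pmf p (e k))"
proof -
  obtain e N where eN: "(SOME (e, N). dec_enum p e N) = (e, N)" by (metis surj_pair)
  have "\<exists>x. case x of (e, N) \<Rightarrow> dec_enum p e N" using dec_enum_exists by auto
  from someI_ex[OF this] have de: "dec_enum p e N" by (simp add: eN)
  define k where
    "k = (THE k. enat k < N \<and> (\<Sum>i<k. pmf p (e i)) \<le> t \<and> t < (\<Sum>i<Suc k. pmf p (e i)))"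
  have "enat k < N \<and> (\<Sum>i<k. pmf p (e i)) \<le> t \<and> t < (\<Sum>i<Suc k. pmf p (e i))"
    unfolding k_def using dec_enum_interval_unique[OF de assms] by (rule theI')
  moreover have "cfun p t = ln (1 / pmf p (e k))"
    by (simp add: cfun_def eN k_def Let_def)
  ultimately show ?thesis using de that by blast
qed

lemma cfun_level:
  fixes p :: "'a::countable pmf"
  assumes "0 \<le> t" "t < 1"
  shows "\<exists>v>0. cfun p t = ln (1 / v) \<and> t < measure p {a. v \<le> pmf p a}
                \<and> measure p {a. v < pmf p a} \<le> t"
proof -
  obtain e N k where de: "dec_enum p e N" and kN: "enat k < N"
    and lower: "(\<Sum>i<k. pmf p (e i)) \<le> t" and upper: "t < (\<Sum>i<Suc k. pmf p (e i))"
    and cf: "cfun p t = ln (1 / pmf p (e k))"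
    using cfun_atom[OF assms] by blast
  have bij: "bij_betw e {k. enat k < N} (set_pmf p)"
    and mono: "\<And>i j. enat j < N \<Longrightarrow> i \<le> j \<Longrightarrow> pmf p (e j) \<le> pmf p (e i)"
    using de by (auto simp: dec_enum_def)
  define v where "v = pmf p (e k)"
  have "v > 0" using bij kN by (auto simp: v_def pmf_positive dest: bij_betwE)
  have "(\<Sum>i<Suc k. pmf p (e i)) = measure p (e ` {..<Suc k})"
    using kN by (intro dec_enum_prefix_measure[OF de]) (simp add: Suc_ile_eq)
  also have "\<dots> \<le> measure p {a. v \<le> pmf p a}"
    using mono[OF kN] by (intro measure_pmf.finite_measure_mono) (auto simp: v_def)
  finally have heavy: "t < measure p {a. v \<le> pmf p a}" using upper by simp
  have "{a. v < pmf p a} \<subseteq> e ` {..<k}"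
  proof
    fix a assume a: "a \<in> {a. v < pmf p a}"
    then have "a \<in> set_pmf p" using \<open>v > 0\<close> by (simp add: set_pmf_iff)
    then obtain i where i: "enat i < N" "a = e i"
      using bij_betw_imp_surj_on[OF bij] by auto
    have "i < k" using mono[OF i(1), of k] a i by (auto simp: v_def not_less[symmetric])
    then show "a \<in> e ` {..<k}" using i by auto
  qed
  then have "measure p {a. v < pmf p a} \<le> measure p (e ` {..<k})"
    by (intro measure_pmf.finite_measure_mono) auto
  also have "\<dots> = (\<Sum>i<k. pmf p (e i))"
    using kN by (intro dec_enum_prefix_measure[OF de, symmetric]) simp
  finally have light: "measure p {a. v < pmf p a} \<le> t" using lower by simp
  show ?thesis using \<open>v > 0\<close> cf heavy light by (auto simp: v_def)
qed

lemma pmf_summable_on: "pmf p summable_on A"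
  using abs_summable_equivalent pmf_abs_summable abs_summable_summable by blast

lemma measure_pmf_infsum: "measure (measure_pmf p) A = infsum (pmf p) A"
  by (simp add: measure_pmf_conv_infsetsum infsetsum_infsum[OF pmf_abs_summable])

lemma pmf_absdiff_summable: "(\<lambda>y. \<bar>pmf p y - pmf q y\<bar>) summable_on A"
  by (rule summable_on_comparison_test[of "\<lambda>y. pmf p y + pmf q y"])
     (auto intro: summable_on_add pmf_summable_on simp: abs_le_iff)

lemma var_dist_nonneg: "0 \<le> var_dist p q"
  unfolding var_dist_def by (intro infsum_nonneg) auto

lemma var_dist_le_2: "var_dist p q \<le> 2"
proof -
  have "var_dist p q \<le> (\<Sum>\<^sub>\<infinity> y. pmf p y + pmf q y)"
    unfolding var_dist_def
    by (intro infsum_mono pmf_absdiff_summable summable_on_add pmf_summable_on) (auto simp: abs_le_iff)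
  also have "\<dots> = measure p UNIV + measure q UNIV"
    by (simp add: infsum_add pmf_summable_on measure_pmf_infsum)
  finally show ?thesis by simp
qed

lemma infsum_le_var_dist:
  assumes "g summable_on A" "\<And>y. y \<in> A \<Longrightarrow> g y \<le> \<bar>pmf p y - pmf q y\<bar>"
  shows "infsum g A \<le> var_dist p q"
  unfolding var_dist_def using assms pmf_absdiff_summable by (intro infsum_mono_neutral) auto

lemma measure_diff_le_var_dist:
  "measure (measure_pmf q) A - measure (measure_pmf p) A \<le> var_dist p q"
proof -
  have "measure q A \<le> (\<Sum>\<^sub>\<infinity> y\<in>A. pmf p y + \<bar>pmf p y - pmf q y\<bar>)"
    unfolding measure_pmf_infsum
    by (intro infsum_mono summable_on_add pmf_summable_on pmf_absdiff_summable) auto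
  also have "\<dots> = measure p A + (\<Sum>\<^sub>\<infinity> y\<in>A. \<bar>pmf p y - pmf q y\<bar>)"
    by (simp add: infsum_add pmf_summable_on pmf_absdiff_summable measure_pmf_infsum)
  also have "(\<Sum>\<^sub>\<infinity> y\<in>A. \<bar>pmf p y - pmf q y\<bar>) \<le> var_dist p q"
    by (intro infsum_le_var_dist pmf_absdiff_summable) auto
  finally show ?thesis by simp
qed

lemma pmf_bind_Pair:
  "pmf (bind_pmf P (\<lambda>x. map_pmf (Pair x) (K x))) (x, y) = pmf P x * pmf (K x) y"
proof -
  have "pmf (map_pmf (Pair a) (K a)) (x, y) = indicator {x} a * pmf (K x) y" for a
    by (cases "a = x") (auto simp: pmf_map_inj' inj_on_def intro: pmf_map_outside)
  then show ?thesis by (simp add: pmf_bind measure_pmf_single)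
qed

lemma var_dist_bind_Pair:
  "var_dist (bind_pmf P (\<lambda>x. map_pmf (Pair x) (K x))) (bind_pmf P (\<lambda>x. map_pmf (Pair x) (L x)))
     = (\<Sum>\<^sub>\<infinity> x. pmf P x * var_dist (K x) (L x))"
proof -
  define JK where "JK = bind_pmf P (\<lambda>x. map_pmf (Pair x) (K x))"
  define JL where "JL = bind_pmf P (\<lambda>x. map_pmf (Pair x) (L x))"
  have summable: "(\<lambda>(x, y). \<bar>pmf JK (x, y) - pmf JL (x, y)\<bar>) summable_on UNIV \<times> UNIV"
    using pmf_absdiff_summable[of JK JL UNIV] by (simp add: case_prod_beta')
  have "var_dist JK JL = (\<Sum>\<^sub>\<infinity> (x, y)\<in>UNIV \<times> UNIV. \<bar>pmf JK (x, y) - pmf JL (x, y)\<bar>)"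
    by (simp add: var_dist_def case_prod_beta')
  also have "\<dots> = (\<Sum>\<^sub>\<infinity> x. \<Sum>\<^sub>\<infinity> y. \<bar>pmf JK (x, y) - pmf JL (x, y)\<bar>)"
    using infsum_Sigma'_banach[OF summable] by simp
  also have "\<dots> = (\<Sum>\<^sub>\<infinity> x. pmf P x * var_dist (K x) (L x))"
    by (simp add: JK_def JL_def pmf_bind_Pair var_dist_def abs_mult infsum_cmult_right'
             flip: right_diff_distrib)
  finally show ?thesis by (simp add: JK_def JL_def)
qed

lemma pmf_le_pmf_map: "pmf q z \<le> pmf (map_pmf \<phi> q) (\<phi> z)"
proof -
  have "pmf q z = measure q {z}" by (simp add: measure_pmf_single)
  also have "\<dots> \<le> measure q (\<phi> -` {\<phi> z})" by (intro measure_pmf.finite_measure_mono) auto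
  finally show ?thesis by (simp add: pmf_map)
qed

lemma var_dist_ge_of_cfun_gap:
  fixes p :: "'y::countable pmf" and q :: "'z::countable pmf"
  assumes "0 \<le> \<delta>" "0 < \<epsilon>" "\<delta> + \<epsilon> < 1" "0 < \<gamma>"
    and gap: "cfun q (\<delta> + \<epsilon>) - cfun p \<delta> < - \<gamma>"
  shows "(1 - exp (- \<gamma>)) * \<epsilon> \<le> var_dist p (map_pmf \<phi> q)"
proof -
  define q' where "q' = map_pmf \<phi> q"
  define D where "D = var_dist p q'"
  obtain vq where vq: "vq > 0" "cfun q (\<delta> + \<epsilon>) = ln (1 / vq)"
      "\<delta> + \<epsilon> < measure q {z. vq \<le> pmf q z}"
    using cfun_level[of "\<delta> + \<epsilon>" q] assms by auto
  obtain vp where vp: "vp > 0" "cfun p \<delta> = ln (1 / vp)" "measure p {y. vp < pmf p y} \<le> \<delta>"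
    using cfun_level[of \<delta> p] assms by auto
  have "ln vp + \<gamma> < ln vq" using gap vq vp by (simp add: ln_div)
  then have "exp (ln vp + \<gamma>) < exp (ln vq)" by simp
  then have levels: "exp \<gamma> * vp < vq" using vp vq by (simp add: exp_add mult.commute)
  define B where "B = \<phi> ` {z. vq \<le> pmf q z}"
  define C where "C = B \<inter> {y. pmf p y \<le> vp}"
  have "measure q {z. vq \<le> pmf q z} \<le> measure q (\<phi> -` B)"
    by (intro measure_pmf.finite_measure_mono) (auto simp: B_def)
  then have "\<delta> + \<epsilon> < measure q' B" using vq by (simp add: q'_def measure_map_pmf)
  moreover have "measure q' B - measure p B \<le> D"
    unfolding D_def by (rule measure_diff_le_var_dist)
  moreover have "measure p B \<le> measure p C + measure p {y. vp < pmf p y}"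
    by (rule order.trans[OF _ measure_subadditive])
       (auto intro: measure_pmf.finite_measure_mono simp: C_def)
  ultimately have C_large: "\<epsilon> - D < measure p C" using vp by simp
  have "(exp \<gamma> - 1) * pmf p y \<le> \<bar>pmf p y - pmf q' y\<bar>" if "y \<in> C" for y
  proof -
    obtain z where z: "vq \<le> pmf q z" "y = \<phi> z" using \<open>y \<in> C\<close> by (auto simp: C_def B_def)
    have "exp \<gamma> * pmf p y \<le> exp \<gamma> * vp" using \<open>y \<in> C\<close> by (simp add: C_def)
    also have "\<dots> \<le> pmf q z" using levels z by simp
    also have "\<dots> \<le> pmf q' y" unfolding q'_def z(2) by (rule pmf_le_pmf_map)
    finally show ?thesis by (simp add: algebra_simps)
  qed
  then have "(\<Sum>\<^sub>\<infinity> y\<in>C. (exp \<gamma> - 1) * pmf p y) \<le> D"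
    unfolding D_def by (intro infsum_le_var_dist summable_on_cmult_right pmf_summable_on)
  then have "(exp \<gamma> - 1) * measure p C \<le> D"
    by (simp add: measure_pmf_infsum infsum_cmult_right')
  moreover have "(exp \<gamma> - 1) * (\<epsilon> - D) \<le> (exp \<gamma> - 1) * measure p C"
    using C_large assms by (intro mult_left_mono) auto
  ultimately have "(exp \<gamma> - 1) * \<epsilon> \<le> exp \<gamma> * D" by (simp add: algebra_simps)
  then show ?thesis by (simp add: D_def q'_def exp_minus field_simps)
qed

text \<open>Consequently the Lebesgue measure of the set of levels with a \<open>\<gamma>\<close>-gap is at most
  \<open>d(p, \<phi>(q)) / ((1 - e\<^sup>-\<^sup>\<gamma>) \<epsilon>)\<close>: it vanishes unless that ratio is at least 1.\<close>
lemma cfun_gap_measure_le: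
  fixes p :: "'y::countable pmf" and q :: "'z::countable pmf"
  assumes "0 < \<epsilon>" "\<epsilon> < 1" "0 < \<gamma>"
  shows "measure lborel {\<delta> \<in> {0..<1 - \<epsilon>}. cfun q (\<delta> + \<epsilon>) - cfun p \<delta> < - \<gamma>}
           \<le> var_dist p (map_pmf \<phi> q) / ((1 - exp (- \<gamma>)) * \<epsilon>)"
    (is "measure lborel ?S \<le> ?d / ?c")
proof (cases "?S = {}")
  case True
  have "0 \<le> ?d / ?c"
    using assms by (intro divide_nonneg_nonneg mult_nonneg_nonneg var_dist_nonneg) auto
  then show ?thesis by (simp only: True measure_empty)
next
  case False
  then obtain \<delta> where "0 \<le> \<delta>" "\<delta> < 1 - \<epsilon>" "cfun q (\<delta> + \<epsilon>) - cfun p \<delta> < - \<gamma>" by auto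
  then have "?c \<le> ?d" using assms by (intro var_dist_ge_of_cfun_gap) auto
  then have "1 \<le> ?d / ?c" using assms by simp
  moreover have "measure lborel ?S \<le> 1"
  proof (cases "?S \<in> sets lborel")
    case True
    have "{0..<1 - \<epsilon>} \<in> fmeasurable lborel"
      using assms by (simp add: fmeasurable_def emeasure_lborel_Ico)
    then have "measure lborel ?S \<le> measure lborel {0..<1 - \<epsilon>}"
      using True by (intro measure_mono_fmeasurable) auto
    then show ?thesis using assms by simp
  qed (simp add: measure_notin_sets)
  ultimately show ?thesis by linarith
qed

lemma expectation_bounded_infsum:
  fixes f :: "'a \<Rightarrow> real"
  assumes "\<And>x. \<bar>f x\<bar> \<le> B"
  shows "measure_pmf.expectation p f = (\<Sum>\<^sub>\<infinity> x. pmf p x * f x)"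
proof -
  have "Infinite_Set_Sum.abs_summable_on (\<lambda>x. pmf p x * f x) UNIV"
  proof (rule abs_summable_on_comparison_test')
    show "Infinite_Set_Sum.abs_summable_on (\<lambda>x. pmf p x * B) UNIV"
      by (intro abs_summable_on_cmult_left pmf_abs_summable)
    show "norm (pmf p x * f x) \<le> pmf p x * B" for x
      using assms[of x] by (simp add: abs_mult mult_left_mono)
  qed
  then show ?thesis by (simp add: pmf_expectation_eq_infsetsum infsetsum_infsum)
qed

lemma expectation_le_var_dist_joint:
  fixes f :: "'x::countable \<Rightarrow> real"
  assumes "c > 0" "\<And>x. \<bar>f x\<bar> \<le> var_dist (K x) (L x) / c"
  shows "measure_pmf.expectation P f
           \<le> var_dist (bind_pmf P (\<lambda>x. map_pmf (Pair x) (K x)))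
                       (bind_pmf P (\<lambda>x. map_pmf (Pair x) (L x))) / c"
proof -
  define d where "d x = var_dist (K x) (L x)" for x
  have d_bound: "\<bar>d x\<bar> \<le> 2" for x
    using var_dist_nonneg[of "K x" "L x"] var_dist_le_2[of "K x" "L x"] by (simp add: d_def)
  then have d_div_bound: "\<bar>d x / c\<bar> \<le> 2 / c" for x
    using assms(1) by (simp add: divide_right_mono)
  have f_bound: "\<bar>f x\<bar> \<le> 2 / c" for x
    using assms(2)[of x] d_div_bound[of x] unfolding d_def by linarith
  have "measure_pmf.expectation P f \<le> measure_pmf.expectation P (\<lambda>x. d x / c)"
  proof (rule integral_mono)
    show "integrable P f"
      by (rule measure_pmf.integrable_const_bound[where B = "2 / c"]) (simp_all add: f_bound)
    show "integrable P (\<lambda>x. d x / c)"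
      by (rule measure_pmf.integrable_const_bound[where B = "2 / c"]) (auto simp del: abs_divide simp add: d_div_bound)
    show "f x \<le> d x / c" for x
      using assms(2)[of x] unfolding d_def by linarith
  qed
  also have "\<dots> = (\<Sum>\<^sub>\<infinity> x. pmf P x * d x) / c"
    using expectation_bounded_infsum[of d 2 P] d_bound by simp
  finally show ?thesis by (simp add: var_dist_bind_Pair d_def)
qed

theorem theorem5:
  fixes PX :: "nat \<Rightarrow> 'x::countable pmf"
    and PZX :: "nat \<Rightarrow> 'x \<Rightarrow> 'z::countable pmf"
    and W :: "nat \<Rightarrow> 'x \<Rightarrow> 'y::countable pmf"
    and \<epsilon> \<gamma> :: real
  assumes "approximating_source PX PZX W"
    and "0 < \<epsilon>" and "\<epsilon> < 1" and "0 < \<gamma>"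
  shows "(\<lambda>n. measure_pmf.expectation (PX n)
            (\<lambda>x. measure lborel
               {\<delta> \<in> {0..<1 - \<epsilon>}. cfun (PZX n x) (\<delta> + \<epsilon>) - cfun (W n x) \<delta> < - \<gamma>}))
         \<longlonglongrightarrow> 0"
proof -
  obtain \<phi> :: "nat \<Rightarrow> 'x \<Rightarrow> 'z \<Rightarrow> 'y" where lim:
    "(\<lambda>n. var_dist (joint_channel (PX n) (W n)) (joint_simulated (PX n) (PZX n) (\<phi> n))) \<longlonglongrightarrow> 0"
    using assms(1) unfolding approximating_source_def by blast
  define V where "V n = var_dist (joint_channel (PX n) (W n)) (joint_simulated (PX n) (PZX n) (\<phi> n))"
    for n
  define c where "c = (1 - exp (- \<gamma>)) * \<epsilon>"
  have "c > 0" using assms by (simp add: c_def)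
  define f where "f n x = measure lborel
      {\<delta> \<in> {0..<1 - \<epsilon>}. cfun (PZX n x) (\<delta> + \<epsilon>) - cfun (W n x) \<delta> < - \<gamma>}" for n x
  have upper: "measure_pmf.expectation (PX n) (f n) \<le> V n / c" for n
  proof -
    have joint: "joint_simulated (PX n) (PZX n) (\<phi> n)
        = bind_pmf (PX n) (\<lambda>x. map_pmf (Pair x) (map_pmf (\<phi> n x) (PZX n x)))"
      by (simp add: joint_simulated_def map_pmf_comp)
    have bound: "\<bar>f n x\<bar> \<le> var_dist (W n x) (map_pmf (\<phi> n x) (PZX n x)) / c" for x
      using cfun_gap_measure_le[OF assms(2-4)] by (simp add: f_def c_def)
    show ?thesis
      using expectation_le_var_dist_joint[where P = "PX n" and K = "W n"
          and L = "\<lambda>x. map_pmf (\<phi> n x) (PZX n x)", OF \<open>c > 0\<close> bound]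
      by (simp add: V_def joint_channel_def joint)
  qed
  have lower: "0 \<le> measure_pmf.expectation (PX n) (f n)" for n
    by (simp add: f_def)
  have "(\<lambda>n. V n / c) \<longlonglongrightarrow> 0"
    using tendsto_divide_zero[OF lim] unfolding V_def .
  then have "(\<lambda>n. measure_pmf.expectation (PX n) (f n)) \<longlonglongrightarrow> 0"
    by (rule tendsto_sandwich[OF always_eventually always_eventually tendsto_const, rotated 2])
       (use lower upper in blast)+
  then show ?thesis unfolding f_def .
qed

end
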